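(* Fix $\beta>0$ and a transient MDP with a sink state as in the context. Let $\pi=(\bm d)_\infty\in\Pi_{\mathrm{SR}}$. Then there exists a vector $\bm f\in\mathbb R^S$ with $\bm f\ge\bm 0$, $\bm f\neq\bm 0$, $\bm f^\top\bm B^{\bm d}=\rho(\bm B^{\bm d})\,\bm f^\top$, and \[ \bm f^\top\bm b^{\bm d}>0. \]
   Context: MDP: states $\mathcal S=\{1,\dots,S\}$ plus sink state $e$ ($p(e,a,e)=1$, $r(e,a,e)=0$); finite actions; transitions $p(s,a,s')$, real rewards $r(s,a,s')$. Transience (standing assumption): for every stationary deterministic policy $\pi$, $\sum_{t\ge0}\mathbb P^{\pi,s}[\tilde s_t=s']<\infty$ for all $s,s'\in\mathcal S$. $\Pi_{\mathrm{SR}}$: stationary randomized policies $(\bm d)_\infty$, $d_a(s)$ the probability of action $a$ in $s$. $B^{\bm d}_{s,s'}=\sum_a p(s,a,s')d_a(s)e^{-\beta r(s,a,s')}$, $b^{\bm d}_s=\sum_a p(s,a,e)d_a(s)e^{-\beta r(s,a,e)}$; $\rho$ is the spectral radius. *)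

theory Defs
  imports Complex_Main "Jordan_Normal_Form.Spectral_Radius"
begin

text \<open>States of S are 0,...,S-1; the sink state e is encoded as the index S.
  A s is the (finite, nonempty) set of actions available in state s.
  p s a s' transition probabilities, r s a s' rewards.\<close>

definition mdp :: "nat \<Rightarrow> (nat \<Rightarrow> 'a set) \<Rightarrow> (nat \<Rightarrow> 'a \<Rightarrow> nat \<Rightarrow> real) \<Rightarrow> bool" where
  "mdp S A p \<longleftrightarrow>
     (\<forall>s\<le>S. finite (A s) \<and> A s \<noteq> {}) \<and>
     (\<forall>s<S. \<forall>a\<in>A s. (\<forall>s'\<le>S. 0 \<le> p s a s') \<and> (\<Sum>s'\<le>S. p s a s') = 1) \<and>
     (\<forall>a\<in>A S. p S a S = 1)"

definition trans_mat :: "nat \<Rightarrow> (nat \<Rightarrow> 'a \<Rightarrow> nat \<Rightarrow> real) \<Rightarrow> (nat \<Rightarrow> 'a) \<Rightarrow> real mat" where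
  "trans_mat S p \<sigma> = mat S S (\<lambda>(s, s'). p s (\<sigma> s) s')"

text \<open>P^{sigma,s}[state at time t = s'] for s, s' in S equals the (s,s') entry of the t-th power.\<close>
definition transient :: "nat \<Rightarrow> (nat \<Rightarrow> 'a set) \<Rightarrow> (nat \<Rightarrow> 'a \<Rightarrow> nat \<Rightarrow> real) \<Rightarrow> bool" where
  "transient S A p \<longleftrightarrow>
     (\<forall>\<sigma>. (\<forall>s<S. \<sigma> s \<in> A s) \<longrightarrow>
        (\<forall>s<S. \<forall>s'<S. summable (\<lambda>t. (trans_mat S p \<sigma> ^\<^sub>m t) $$ (s, s'))))"

definition rand_rule :: "nat \<Rightarrow> (nat \<Rightarrow> 'a set) \<Rightarrow> (nat \<Rightarrow> 'a \<Rightarrow> real) \<Rightarrow> bool" where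
  "rand_rule S A d \<longleftrightarrow> (\<forall>s<S. (\<forall>a\<in>A s. 0 \<le> d s a) \<and> (\<Sum>a\<in>A s. d s a) = 1)"

definition Bmat :: "nat \<Rightarrow> (nat \<Rightarrow> 'a set) \<Rightarrow> (nat \<Rightarrow> 'a \<Rightarrow> nat \<Rightarrow> real) \<Rightarrow>
    (nat \<Rightarrow> 'a \<Rightarrow> nat \<Rightarrow> real) \<Rightarrow> real \<Rightarrow> (nat \<Rightarrow> 'a \<Rightarrow> real) \<Rightarrow> real mat" where
  "Bmat S A p r \<beta> d = mat S S (\<lambda>(s, s'). \<Sum>a\<in>A s. p s a s' * d s a * exp (- \<beta> * r s a s'))"

definition bvec :: "nat \<Rightarrow> (nat \<Rightarrow> 'a set) \<Rightarrow> (nat \<Rightarrow> 'a \<Rightarrow> nat \<Rightarrow> real) \<Rightarrow>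
    (nat \<Rightarrow> 'a \<Rightarrow> nat \<Rightarrow> real) \<Rightarrow> real \<Rightarrow> (nat \<Rightarrow> 'a \<Rightarrow> real) \<Rightarrow> real vec" where
  "bvec S A p r \<beta> d = vec S (\<lambda>s. \<Sum>a\<in>A s. p s a S * d s a * exp (- \<beta> * r s a S))"

definition spec_rad :: "real mat \<Rightarrow> real" where
  "spec_rad M = spectral_radius (map_mat complex_of_real M)"

end

theory Submission
  imports Defs
begin

text \<open>A nonnegative left eigenvector \<open>f\<close> of \<open>B\<close> for \<open>\<rho>(B)\<close> (weak Perron--Frobenius) is
  obtained as a limit point of the normalized column sums of the resolvent \<open>(t I - B)\<^sup>-\<^sup>1\<close>
  as \<open>t \<down> \<rho>(B)\<close>; these sums blow up at least like \<open>t / (t - \<rho>(B))\<close>, which forces the limit to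
  be an eigenvector. If \<open>f\<^sup>T b = 0\<close>, then from the support of \<open>f\<close> no action played with
  positive probability reaches the sink, and \<open>f\<^sup>T B = \<rho>(B) f\<^sup>T\<close> shows that these actions
  never leave the support either. A deterministic policy choosing such actions then keeps the
  chain inside the support forever, contradicting transience.\<close>

section \<open>Powers and spectral radius of matrices\<close>

lemma pow_mat_Suc_index:
  fixes B :: "'b::comm_semiring_1 mat"
  assumes "B \<in> carrier_mat n n" and "i < n" and "j < n"
  shows "(B ^\<^sub>m Suc k) $$ (i, j) = (\<Sum>l<n. (B ^\<^sub>m k) $$ (i, l) * B $$ (l, j))"
  using assms by (simp add: scalar_prod_def row_def col_def lessThan_atLeast0)

lemma pow_mat_nonneg:
  fixes B :: "'b::linordered_semidom mat"
  assumes B: "B \<in> carrier_mat n n" and nonneg: "\<forall>i<n. \<forall>j<n. 0 \<le> B $$ (i, j)"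
    and "i < n" and "j < n"
  shows "0 \<le> (B ^\<^sub>m k) $$ (i, j)"
  using \<open>j < n\<close>
proof (induction k arbitrary: j)
  case 0
  then show ?case using B \<open>i < n\<close> by simp
next
  case (Suc k)
  then show ?case
    unfolding pow_mat_Suc_index[OF B \<open>i < n\<close> Suc.prems]
    using nonneg by (intro sum_nonneg mult_nonneg_nonneg) auto
qed

lemma smult_pow_mat:
  fixes B :: "'b::comm_semiring_1 mat"
  assumes B: "B \<in> carrier_mat n n"
  shows "(c \<cdot>\<^sub>m B) ^\<^sub>m k = c ^ k \<cdot>\<^sub>m B ^\<^sub>m k"
proof (induction k)
  case 0
  then show ?case using B by (auto intro!: eq_matI)
next
  case (Suc k)
  then show ?case
    using B by (auto intro!: eq_matI simp: scalar_prod_def sum_distrib_left ac_simps)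
qed

lemma transpose_mult_vec_index:
  assumes "B \<in> carrier_mat nr nc" and "f \<in> carrier_vec nr" and "j < nc"
  shows "(transpose_mat B *\<^sub>v f) $ j = (\<Sum>i<nr. B $$ (i, j) * f $ i)"
  using assms by (simp add: scalar_prod_def col_def lessThan_atLeast0)

lemma eigenvalue_smult_mat:
  fixes A :: "'b::field mat"
  assumes A: "A \<in> carrier_mat n n" and c: "c \<noteq> 0" and ev: "eigenvalue (c \<cdot>\<^sub>m A) \<mu>"
  shows "eigenvalue A (\<mu> / c)"
proof -
  from ev obtain v where v: "v \<in> carrier_vec n" "v \<noteq> 0\<^sub>v n" "(c \<cdot>\<^sub>m A) *\<^sub>v v = \<mu> \<cdot>\<^sub>v v"
    unfolding eigenvalue_def eigenvector_def using A by auto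
  have "A *\<^sub>v v = (\<mu> / c) \<cdot>\<^sub>v v"
  proof (rule eq_vecI)
    fix i
    assume "i < dim_vec ((\<mu> / c) \<cdot>\<^sub>v v)"
    then have i: "i < n" using v by simp
    have "c * (A *\<^sub>v v) $ i = \<mu> * v $ i"
      using arg_cong[OF v(3), of "\<lambda>w. w $ i"] i A v(1) by simp
    then show "(A *\<^sub>v v) $ i = ((\<mu> / c) \<cdot>\<^sub>v v) $ i"
      using i v(1) c by (simp add: field_simps)
  qed (use A v in simp)
  then show ?thesis unfolding eigenvalue_def eigenvector_def using A v by auto
qed

lemma spec_rad_nonneg:
  assumes "B \<in> carrier_mat n n" and "0 < n"
  shows "0 \<le> spec_rad B"
  using spectral_radius_mem_max(1)[of "map_mat complex_of_real B" n] assms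
  unfolding spec_rad_def by auto

lemma spec_rad_pow_entry_bound:
  fixes B :: "real mat"
  assumes B: "B \<in> carrier_mat n n" and n: "0 < n" and s: "spec_rad B < s"
  obtains c where "\<And>k i j. i < n \<Longrightarrow> j < n \<Longrightarrow> \<bar>(B ^\<^sub>m k) $$ (i, j)\<bar> \<le> c * s ^ k"
proof -
  have s0: "0 < s" using spec_rad_nonneg[OF B n] s by simp
  define Bc where "Bc = map_mat complex_of_real B"
  define C where "C = complex_of_real (1 / s) \<cdot>\<^sub>m Bc"
  have Bc: "Bc \<in> carrier_mat n n" and C: "C \<in> carrier_mat n n"
    using B unfolding Bc_def C_def by auto
  have "norm \<nu> < 1" if "\<nu> \<in> spectrum C" for \<nu>
  proof -
    have "eigenvalue Bc (\<nu> * complex_of_real s)"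
      using eigenvalue_smult_mat[OF Bc _ that[unfolded spectrum_def mem_Collect_eq C_def]] s0
      by simp
    then have "norm (\<nu> * complex_of_real s) \<le> spec_rad B"
      using spectral_radius_mem_max(2)[OF Bc n] unfolding spec_rad_def Bc_def spectrum_def by auto
    then have "norm \<nu> * s \<le> spec_rad B" using s0 by (simp add: norm_mult)
    then show ?thesis using s s0 by (smt (verit) mult_le_cancel_right1)
  qed
  then have "spectral_radius C < 1" using spectral_radius_mem_max(1)[OF C n] by auto
  from spectral_radius_jnf_norm_bound_less_1_upper_triangular[OF C this]
  obtain c where c: "\<And>k. norm_bound (C ^\<^sub>m k) c" by auto
  have "\<bar>(B ^\<^sub>m k) $$ (i, j)\<bar> \<le> c * s ^ k" if "i < n" "j < n" for k i j
  proof -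
    have "C ^\<^sub>m k = complex_of_real ((1 / s) ^ k) \<cdot>\<^sub>m Bc ^\<^sub>m k"
      unfolding C_def smult_pow_mat[OF Bc] by simp
    also have "Bc ^\<^sub>m k = map_mat complex_of_real (B ^\<^sub>m k)"
      unfolding Bc_def by (rule of_real_hom.mat_hom_pow[OF B, symmetric])
    finally have "(1 / s) ^ k * \<bar>(B ^\<^sub>m k) $$ (i, j)\<bar> \<le> c"
      using c[of k] that B s0 unfolding norm_bound_def
      by (auto simp: norm_mult simp del: of_real_power)
    then show ?thesis using s0 by (simp add: field_simps)
  qed
  then show thesis using that by blast
qed

lemma spec_rad_pow_le_entry_sum:
  fixes B :: "real mat"
  assumes B: "B \<in> carrier_mat n n" and n: "0 < n" and nonneg: "\<forall>i<n. \<forall>j<n. 0 \<le> B $$ (i, j)"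
  shows "spec_rad B ^ k \<le> (\<Sum>j<n. \<Sum>l<n. (B ^\<^sub>m k) $$ (l, j))"
proof -
  define Bc where "Bc = map_mat complex_of_real B"
  have Bc: "Bc \<in> carrier_mat n n" using B unfolding Bc_def by simp
  from spectral_radius_mem_max(1)[OF Bc n] obtain \<mu> v
    where ev: "eigenvector Bc v \<mu>" and \<mu>: "norm \<mu> = spec_rad B"
    unfolding spec_rad_def Bc_def spectrum_def eigenvalue_def by auto
  then have v: "v \<in> carrier_vec n" "v \<noteq> 0\<^sub>v n" using Bc unfolding eigenvector_def by auto
  define V where "V = (\<Sum>j<n. norm (v $ j))"
  have V: "0 < V"
  proof -
    obtain j where "j < n" "v $ j \<noteq> 0" using v by (auto simp: vec_eq_iff)
    then show ?thesis unfolding V_def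
      by (intro sum_pos2[of _ j]) auto
  qed
  have row: "spec_rad B ^ k * norm (v $ l) \<le> (\<Sum>j<n. (B ^\<^sub>m k) $$ (l, j) * norm (v $ j))"
    if l: "l < n" for l
  proof -
    have "Bc ^\<^sub>m k *\<^sub>v v = \<mu> ^ k \<cdot>\<^sub>v v" by (rule eigenvector_pow[OF Bc ev])
    then have "spec_rad B ^ k * norm (v $ l) = norm (\<Sum>j<n. complex_of_real ((B ^\<^sub>m k) $$ (l, j)) * v $ j)"
      using l v B \<mu> unfolding Bc_def of_real_hom.mat_hom_pow[OF B, symmetric]
      by (auto simp: vec_eq_iff scalar_prod_def lessThan_atLeast0 norm_mult norm_power)
    also have "\<dots> \<le> (\<Sum>j<n. norm (complex_of_real ((B ^\<^sub>m k) $$ (l, j)) * v $ j))"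
      by (rule norm_sum)
    also have "\<dots> = (\<Sum>j<n. (B ^\<^sub>m k) $$ (l, j) * norm (v $ j))"
      using pow_mat_nonneg[OF B nonneg l] by (intro sum.cong) (auto simp: norm_mult)
    finally show ?thesis .
  qed
  have "spec_rad B ^ k * V \<le> (\<Sum>l<n. \<Sum>j<n. (B ^\<^sub>m k) $$ (l, j) * norm (v $ j))"
    unfolding V_def sum_distrib_left by (intro sum_mono row) simp
  also have "\<dots> \<le> (\<Sum>l<n. \<Sum>j<n. (B ^\<^sub>m k) $$ (l, j) * V)"
    unfolding V_def using pow_mat_nonneg[OF B nonneg]
    by (intro sum_mono mult_left_mono member_le_sum) auto
  also have "\<dots> = (\<Sum>j<n. \<Sum>l<n. (B ^\<^sub>m k) $$ (l, j)) * V"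
    by (subst sum.swap) (simp add: sum_distrib_right)
  finally show ?thesis using V by simp
qed

section \<open>Weak Perron--Frobenius theorem\<close>

text \<open>For \<open>t > spec_rad B\<close> the Neumann series shows that this is \<open>t\<close> times the \<open>j\<close>-th column sum
  of \<open>(t I - B)\<^sup>-\<^sup>1\<close>.\<close>

definition resolvent_col_sum :: "real mat \<Rightarrow> real \<Rightarrow> nat \<Rightarrow> real" where
  "resolvent_col_sum B t j = (\<Sum>k. (\<Sum>l<dim_row B. (B ^\<^sub>m k) $$ (l, j)) / t ^ k)"

lemma summable_resolvent_col_sum:
  fixes B :: "real mat"
  assumes B: "B \<in> carrier_mat n n" and n: "0 < n" and t: "spec_rad B < t" and j: "j < n"
  shows "summable (\<lambda>k. (\<Sum>l<n. (B ^\<^sub>m k) $$ (l, j)) / t ^ k)"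
proof -
  define s where "s = (spec_rad B + t) / 2"
  have s: "spec_rad B < s" "0 < s" "s < t" using t spec_rad_nonneg[OF B n] unfolding s_def by auto
  obtain c where c: "\<And>k i j. i < n \<Longrightarrow> j < n \<Longrightarrow> \<bar>(B ^\<^sub>m k) $$ (i, j)\<bar> \<le> c * s ^ k"
    using spec_rad_pow_entry_bound[OF B n s(1)] by blast
  have bound: "norm ((\<Sum>l<n. (B ^\<^sub>m k) $$ (l, j)) / t ^ k) \<le> real n * c * (s / t) ^ k" for k
  proof -
    have "norm ((\<Sum>l<n. (B ^\<^sub>m k) $$ (l, j)) / t ^ k) = \<bar>\<Sum>l<n. (B ^\<^sub>m k) $$ (l, j)\<bar> / t ^ k"
      using s by (simp add: abs_divide)
    also have "\<dots> \<le> (\<Sum>l<n. c * s ^ k) / t ^ k"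
      using s by (intro divide_right_mono order_trans[OF sum_abs sum_mono]) (simp_all add: c j)
    also have "\<dots> = real n * c * (s / t) ^ k" unfolding sum_constant card_lessThan power_divide
      by (simp only: mult.assoc times_divide_eq_right)
    finally show ?thesis .
  qed
  have "summable (\<lambda>k. real n * c * (s / t) ^ k)"
    using s by (intro summable_mult summable_geometric) simp
  then show ?thesis by (rule summable_comparison_test'[OF _ bound])
qed

lemma resolvent_col_sum_nonneg:
  fixes B :: "real mat"
  assumes B: "B \<in> carrier_mat n n" and n: "0 < n" and nonneg: "\<forall>i<n. \<forall>j<n. 0 \<le> B $$ (i, j)"
    and t: "spec_rad B < t" and j: "j < n"
  shows "0 \<le> resolvent_col_sum B t j"
  unfolding resolvent_col_sum_def
  using B t spec_rad_nonneg[OF B n] pow_mat_nonneg[OF B nonneg _ j] summable_resolvent_col_sum[OF B n t j]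
  by (intro suminf_nonneg) (auto intro!: divide_nonneg_pos sum_nonneg)

lemma pow_mat_Suc_col_sum:
  fixes B :: "'b::comm_semiring_1 mat"
  assumes B: "B \<in> carrier_mat n n" and j: "j < n"
  shows "(\<Sum>l<n. (B ^\<^sub>m Suc k) $$ (l, j)) = (\<Sum>i<n. B $$ (i, j) * (\<Sum>l<n. (B ^\<^sub>m k) $$ (l, i)))"
proof -
  have "(\<Sum>l<n. (B ^\<^sub>m Suc k) $$ (l, j)) = (\<Sum>l<n. \<Sum>i<n. (B ^\<^sub>m k) $$ (l, i) * B $$ (i, j))"
    by (intro sum.cong refl pow_mat_Suc_index[OF B _ j]) simp
  then show ?thesis by (subst (asm) sum.swap) (simp add: sum_distrib_left ac_simps)
qed

lemma resolvent_col_sum_fixpoint: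
  fixes B :: "real mat"
  assumes B: "B \<in> carrier_mat n n" and n: "0 < n" and t: "spec_rad B < t" and j: "j < n"
  shows "t * resolvent_col_sum B t j - (\<Sum>i<n. B $$ (i, j) * resolvent_col_sum B t i) = t"
proof -
  define a where "a i k = (\<Sum>l<n. (B ^\<^sub>m k) $$ (l, i)) / t ^ k" for i k
  have t0: "0 < t" using t spec_rad_nonneg[OF B n] by simp
  have R: "resolvent_col_sum B t i = (\<Sum>k. a i k)" for i
    using B unfolding resolvent_col_sum_def a_def by simp
  have summ: "summable (a i)" if "i < n" for i
    unfolding a_def by (rule summable_resolvent_col_sum[OF B n t that])
  have a0: "a j 0 = 1" using B j unfolding a_def by (simp add: sum.If_cases)
  have a_Suc: "a j (Suc k) = (\<Sum>i<n. B $$ (i, j) * a i k) / t" for k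
    unfolding a_def pow_mat_Suc_col_sum[OF B j] using t0
    by (simp add: sum_divide_distrib[symmetric] mult.commute)
  have "summable (\<lambda>k. \<Sum>i<n. B $$ (i, j) * a i k)"
    using summ by (intro summable_sum summable_mult) simp
  then have "(\<Sum>k. a j k) = 1 + (\<Sum>k. \<Sum>i<n. B $$ (i, j) * a i k) / t"
    using suminf_split_head[OF summ[OF j]] a0 a_Suc by (simp add: suminf_divide)
  also have "(\<Sum>k. \<Sum>i<n. B $$ (i, j) * a i k) = (\<Sum>i<n. \<Sum>k. B $$ (i, j) * a i k)"
    by (rule suminf_sum) (simp add: summ summable_mult)
  also have "\<dots> = (\<Sum>i<n. B $$ (i, j) * (\<Sum>k. a i k))"
    by (intro sum.cong refl suminf_mult) (simp add: summ)
  finally show ?thesis unfolding R using t0 by (simp add: field_simps)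
qed

lemma resolvent_col_sum_total_ge:
  fixes B :: "real mat"
  assumes B: "B \<in> carrier_mat n n" and n: "0 < n" and nonneg: "\<forall>i<n. \<forall>j<n. 0 \<le> B $$ (i, j)"
    and t: "spec_rad B < t"
  shows "t / (t - spec_rad B) \<le> (\<Sum>j<n. resolvent_col_sum B t j)"
proof -
  define \<rho> where "\<rho> = spec_rad B"
  have \<rho>: "0 \<le> \<rho>" "\<rho> < t" using t spec_rad_nonneg[OF B n] unfolding \<rho>_def by auto
  have summ: "summable (\<lambda>k. (\<Sum>l<n. (B ^\<^sub>m k) $$ (l, j)) / t ^ k)" if "j < n" for j
    by (rule summable_resolvent_col_sum[OF B n t that])
  have "t / (t - \<rho>) = 1 / (1 - \<rho> / t)"
    using \<rho> by (simp add: field_simps)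
  also have "\<dots> = (\<Sum>k. (\<rho> / t) ^ k)"
    using \<rho> by (intro suminf_geometric[symmetric]) simp
  also have "\<dots> \<le> (\<Sum>k. \<Sum>j<n. (\<Sum>l<n. (B ^\<^sub>m k) $$ (l, j)) / t ^ k)"
  proof (rule suminf_le)
    show "(\<rho> / t) ^ k \<le> (\<Sum>j<n. (\<Sum>l<n. (B ^\<^sub>m k) $$ (l, j)) / t ^ k)" for k
      using spec_rad_pow_le_entry_sum[OF B n nonneg, of k] \<rho>
      unfolding \<rho>_def power_divide sum_divide_distrib[symmetric] by (simp add: divide_right_mono)
    show "summable (\<lambda>k. (\<rho> / t) ^ k)" using \<rho> by simp
    show "summable (\<lambda>k. \<Sum>j<n. (\<Sum>l<n. (B ^\<^sub>m k) $$ (l, j)) / t ^ k)"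
      using summ by (intro summable_sum) simp
  qed
  also have "\<dots> = (\<Sum>j<n. \<Sum>k. (\<Sum>l<n. (B ^\<^sub>m k) $$ (l, j)) / t ^ k)"
    by (rule suminf_sum) (simp add: summ)
  also have "\<dots> = (\<Sum>j<n. resolvent_col_sum B t j)"
    using B unfolding resolvent_col_sum_def by simp
  finally show ?thesis unfolding \<rho>_def .
qed

lemma approx_left_eigenvector:
  fixes B :: "real mat"
  assumes B: "B \<in> carrier_mat n n" and n: "0 < n" and nonneg: "\<forall>i<n. \<forall>j<n. 0 \<le> B $$ (i, j)"
    and t: "spec_rad B < t"
  obtains x where "\<forall>j<n. 0 \<le> x j" and "(\<Sum>j<n. x j) = 1"
    and "\<forall>j<n. \<bar>t * x j - (\<Sum>i<n. B $$ (i, j) * x i)\<bar> \<le> t - spec_rad B"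
proof
  define R where "R = resolvent_col_sum B t"
  define M where "M = (\<Sum>j<n. R j)"
  have t0: "0 < t - spec_rad B" "0 < t" using t spec_rad_nonneg[OF B n] by auto
  have M: "t / (t - spec_rad B) \<le> M"
    unfolding M_def R_def by (rule resolvent_col_sum_total_ge[OF B n nonneg t])
  then have M0: "0 < M" using t0 by (smt (verit) divide_pos_pos)
  show "\<forall>j<n. 0 \<le> R j / M"
    using resolvent_col_sum_nonneg[OF B n nonneg t] M0 unfolding R_def by simp
  show "(\<Sum>j<n. R j / M) = 1"
    using M0 unfolding M_def by (simp add: sum_divide_distrib[symmetric])
  have "t * (R j / M) - (\<Sum>i<n. B $$ (i, j) * (R i / M)) = t / M" if "j < n" for j
    using resolvent_col_sum_fixpoint[OF B n t that, folded R_def]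
    by (simp add: sum_divide_distrib[symmetric] diff_divide_distrib[symmetric])
  moreover have "t / M \<le> t - spec_rad B"
    using M M0 t0 by (simp add: field_simps)
  ultimately show "\<forall>j<n. \<bar>t * (R j / M) - (\<Sum>i<n. B $$ (i, j) * (R i / M))\<bar> \<le> t - spec_rad B"
    using t0 M0 by simp
qed

lemma bounded_common_convergent_subseq:
  fixes X :: "nat \<Rightarrow> 'i \<Rightarrow> real"
  assumes "finite I" and "\<And>m j. j \<in> I \<Longrightarrow> \<bar>X m j\<bar> \<le> K"
  obtains r where "strict_mono r" and "\<And>j. j \<in> I \<Longrightarrow> convergent (\<lambda>m. X (r m) j)"
proof -
  have "\<exists>r. strict_mono r \<and> (\<forall>j\<in>I. convergent (\<lambda>m. X (r m) j))"
    using assms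
  proof (induction I rule: finite_induct)
    case empty
    show ?case using strict_mono_id by blast
  next
    case (insert i I)
    then obtain r where r: "strict_mono r" "\<forall>j\<in>I. convergent (\<lambda>m. X (r m) j)" by auto
    obtain q where q: "strict_mono q" "monoseq (\<lambda>m. X (r (q m)) i)"
      using seq_monosub[of "\<lambda>m. X (r m) i"] by (auto simp: o_def)
    have "Bseq (\<lambda>m. X (r (q m)) i)" using insert.prems[of i] by (intro BseqI'[of _ K]) auto
    then have "convergent (\<lambda>m. X (r (q m)) i)" using q(2) by (rule Bseq_monoseq_convergent)
    moreover have "convergent (\<lambda>m. X (r (q m)) j)" if "j \<in> I" for j
      using convergent_subseq_convergent[OF r(2)[rule_format, OF that] q(1)] by (simp add: o_def)
    ultimately show ?case using strict_mono_o[OF r(1) q(1), unfolded o_def]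
      by (intro exI[of _ "r \<circ> q"]) auto
  qed
  then show thesis using that by blast
qed

theorem nonneg_mat_left_perron_vector:
  fixes B :: "real mat"
  assumes B: "B \<in> carrier_mat n n" and n: "0 < n" and nonneg: "\<forall>i<n. \<forall>j<n. 0 \<le> B $$ (i, j)"
  obtains f where "f \<in> carrier_vec n" and "\<forall>i<n. 0 \<le> f $ i" and "f \<noteq> 0\<^sub>v n"
    and "transpose_mat B *\<^sub>v f = spec_rad B \<cdot>\<^sub>v f"
proof -
  define \<rho> where "\<rho> = spec_rad B"
  define t where "t m = \<rho> + 1 / real (Suc m)" for m
  define approx where "approx m x \<longleftrightarrow> (\<forall>j<n. 0 \<le> x j) \<and> (\<Sum>j<n. x j) = 1 \<and>
      (\<forall>j<n. \<bar>t m * x j - (\<Sum>i<n. B $$ (i, j) * x i)\<bar> \<le> 1 / real (Suc m))" for m x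
  have "\<exists>x. approx m x" for m
  proof -
    have "spec_rad B < t m" and t_gap: "t m - spec_rad B = 1 / real (Suc m)"
      by (simp_all add: t_def \<rho>_def)
    then obtain x where "\<forall>j<n. 0 \<le> x j" "(\<Sum>j<n. x j) = 1"
      "\<forall>j<n. \<bar>t m * x j - (\<Sum>i<n. B $$ (i, j) * x i)\<bar> \<le> t m - spec_rad B"
      using approx_left_eigenvector[OF B n nonneg] by blast
    then show ?thesis unfolding approx_def t_gap by blast
  qed
  then obtain X where "\<And>m. approx m (X m)" using choice[of approx] by blast
  then have X0: "\<And>m j. j < n \<Longrightarrow> 0 \<le> X m j" and X1: "\<And>m. (\<Sum>j<n. X m j) = 1"
    and X_err: "\<And>m j. j < n \<Longrightarrow> \<bar>t m * X m j - (\<Sum>i<n. B $$ (i, j) * X m i)\<bar> \<le> 1 / real (Suc m)"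
    unfolding approx_def by blast+
  have "\<bar>X m j\<bar> \<le> 1" if "j \<in> {..<n}" for m j
    using member_le_sum[of j "{..<n}" "X m"] X0 X1[of m] that by auto
  then obtain r where r: "strict_mono r" and conv: "\<And>j. j < n \<Longrightarrow> convergent (\<lambda>m. X (r m) j)"
    using bounded_common_convergent_subseq[of "{..<n}" X 1] by auto
  define L where "L j = lim (\<lambda>m. X (r m) j)" for j
  have L: "(\<lambda>m. X (r m) j) \<longlonglongrightarrow> L j" if "j < n" for j
    using conv[OF that] unfolding L_def by (simp add: convergent_LIMSEQ_iff)
  have L_nonneg: "0 \<le> L j" if "j < n" for j
    using L[OF that] X0[OF that] by (intro LIMSEQ_le_const) auto
  have "(\<lambda>m. \<Sum>j<n. X (r m) j) \<longlonglongrightarrow> (\<Sum>j<n. L j)" using L by (intro tendsto_sum) auto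
  then have "(\<lambda>m. 1) \<longlonglongrightarrow> (\<Sum>j<n. L j)" using X1 by simp
  then have L_sum: "(\<Sum>j<n. L j) = 1" using LIMSEQ_unique[OF tendsto_const] by metis
  have inv: "(\<lambda>m. 1 / real (Suc (r m))) \<longlonglongrightarrow> 0"
    using LIMSEQ_subseq_LIMSEQ[OF LIMSEQ_inverse_real_of_nat r] by (simp add: o_def divide_inverse)
  have L_eig: "(\<Sum>i<n. B $$ (i, j) * L i) = \<rho> * L j" if j: "j < n" for j
  proof -
    let ?err = "\<lambda>m. t (r m) * X (r m) j - (\<Sum>i<n. B $$ (i, j) * X (r m) i)"
    have "(\<lambda>m. t (r m)) \<longlonglongrightarrow> \<rho>" using tendsto_add[OF tendsto_const inv, of \<rho>] by (simp add: t_def)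
    then have "?err \<longlonglongrightarrow> \<rho> * L j - (\<Sum>i<n. B $$ (i, j) * L i)"
      using L j by (intro tendsto_intros) auto
    moreover have "(\<lambda>m. \<bar>?err m\<bar>) \<longlonglongrightarrow> 0"
      using X_err[OF j] by (intro tendsto_sandwich[OF _ _ tendsto_const inv]) auto
    then have "?err \<longlonglongrightarrow> 0" by (rule tendsto_rabs_zero_cancel)
    ultimately show ?thesis using LIMSEQ_unique by fastforce
  qed
  show thesis
  proof
    show "vec n L \<in> carrier_vec n" and "\<forall>i<n. 0 \<le> vec n L $ i" using L_nonneg by auto
    show "vec n L \<noteq> 0\<^sub>v n"
    proof
      assume "vec n L = 0\<^sub>v n"
      then have "L j = 0" if "j < n" for j using that by (metis index_vec index_zero_vec(1))
      then show False using L_sum by simp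
    qed
    show "transpose_mat B *\<^sub>v vec n L = spec_rad B \<cdot>\<^sub>v vec n L"
    proof (rule eq_vecI)
      fix j
      assume "j < dim_vec (spec_rad B \<cdot>\<^sub>v vec n L)"
      then have j: "j < n" by simp
      show "(transpose_mat B *\<^sub>v vec n L) $ j = (spec_rad B \<cdot>\<^sub>v vec n L) $ j"
        using transpose_mult_vec_index[OF B _ j, of "vec n L"] L_eig[OF j] j by (simp add: \<rho>_def)
    qed (use B in simp)
  qed
qed

lemma left_eigenvector_support_closed:
  fixes B :: "real mat"
  assumes B: "B \<in> carrier_mat n n" and nonneg: "\<forall>i<n. \<forall>j<n. 0 \<le> B $$ (i, j)"
    and f: "f \<in> carrier_vec n" "\<forall>i<n. 0 \<le> f $ i"
    and eig: "transpose_mat B *\<^sub>v f = spec_rad B \<cdot>\<^sub>v f"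
    and i: "i < n" "0 < f $ i" and j: "j < n" "0 < B $$ (i, j)"
  shows "0 < f $ j"
proof -
  have "0 < B $$ (i, j) * f $ i" using i j by simp
  also have "\<dots> \<le> (\<Sum>l<n. B $$ (l, j) * f $ l)"
    using i nonneg f j by (intro member_le_sum) auto
  also have "\<dots> = spec_rad B * f $ j"
    using arg_cong[OF eig, of "\<lambda>v. v $ j"] transpose_mult_vec_index[OF B f(1) j(1)] f(1) j by simp
  finally show ?thesis
    using spec_rad_nonneg[OF B] i f j by (simp add: zero_less_mult_iff)
qed

lemma nonneg_component_le_scalar_prod:
  fixes f b :: "real vec"
  assumes "f \<in> carrier_vec n" "b \<in> carrier_vec n" "\<forall>i<n. 0 \<le> f $ i" "\<forall>i<n. 0 \<le> b $ i" "i < n"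
  shows "f $ i * b $ i \<le> f \<bullet> b"
  using assms unfolding scalar_prod_def by (intro member_le_sum) auto

section \<open>Closed sets of transient states\<close>

lemma pow_mat_mass_on_closed_set:
  fixes P :: "real mat"
  assumes P: "P \<in> carrier_mat n n" and nonneg: "\<forall>i<n. \<forall>j<n. 0 \<le> P $$ (i, j)"
    and F: "F \<subseteq> {..<n}" and rows: "\<And>l. l \<in> F \<Longrightarrow> (\<Sum>j\<in>F. P $$ (l, j)) = 1"
    and s: "s \<in> F"
  shows "1 \<le> (\<Sum>j\<in>F. (P ^\<^sub>m k) $$ (s, j))"
proof (induction k)
  case 0
  have "(\<Sum>j\<in>F. (P ^\<^sub>m 0) $$ (s, j)) = (\<Sum>j\<in>F. if s = j then 1 else 0)"
    using P F s by (intro sum.cong) (auto simp: subset_iff)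
  then show ?case using s F finite_subset by fastforce
next
  case (Suc k)
  have sn: "s < n" using s F by auto
  have "(\<Sum>j\<in>F. (P ^\<^sub>m Suc k) $$ (s, j)) = (\<Sum>j\<in>F. \<Sum>l<n. (P ^\<^sub>m k) $$ (s, l) * P $$ (l, j))"
    using F by (intro sum.cong refl pow_mat_Suc_index[OF P sn]) auto
  also have "\<dots> = (\<Sum>l<n. (P ^\<^sub>m k) $$ (s, l) * (\<Sum>j\<in>F. P $$ (l, j)))"
    by (subst sum.swap) (simp add: sum_distrib_left)
  also have "\<dots> \<ge> (\<Sum>l\<in>F. (P ^\<^sub>m k) $$ (s, l) * (\<Sum>j\<in>F. P $$ (l, j)))"
    using F pow_mat_nonneg[OF P nonneg sn] nonneg
    by (intro sum_mono2) (auto intro!: mult_nonneg_nonneg sum_nonneg)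
  also have "(\<Sum>l\<in>F. (P ^\<^sub>m k) $$ (s, l) * (\<Sum>j\<in>F. P $$ (l, j))) = (\<Sum>l\<in>F. (P ^\<^sub>m k) $$ (s, l))"
    using rows by simp
  finally show ?case using Suc.IH by simp
qed

lemma transient_no_closed_set:
  assumes mdp: "mdp S A p" and transient: "transient S A p" and \<sigma>: "\<forall>s<S. \<sigma> s \<in> A s"
    and F: "F \<subseteq> {..<S}" "F \<noteq> {}"
    and closed: "\<And>s s'. s \<in> F \<Longrightarrow> s' \<le> S \<Longrightarrow> 0 < p s (\<sigma> s) s' \<Longrightarrow> s' \<in> F"
  shows False
proof -
  define P where "P = trans_mat S p \<sigma>"
  have P: "P \<in> carrier_mat S S" unfolding P_def trans_mat_def by simp
  have P_index: "P $$ (s, s') = p s (\<sigma> s) s'" if "s < S" "s' < S" for s s'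
    using that unfolding P_def trans_mat_def by simp
  have p_nonneg: "0 \<le> p s (\<sigma> s) s'" if "s < S" "s' \<le> S" for s s'
    using mdp \<sigma> that unfolding mdp_def by auto
  have "(\<Sum>s'\<in>F. P $$ (s, s')) = 1" if s: "s \<in> F" for s
  proof -
    have "(\<Sum>s'\<in>F. P $$ (s, s')) = (\<Sum>s'\<in>F. p s (\<sigma> s) s')"
      using F s by (intro sum.cong) (auto simp: P_index subset_iff)
    also have "\<dots> = (\<Sum>s'\<le>S. p s (\<sigma> s) s')"
      using F s closed[OF s] p_nonneg by (intro sum.mono_neutral_left) (auto simp: less_le)
    also have "\<dots> = 1" using mdp \<sigma> s F unfolding mdp_def by auto
    finally show ?thesis .
  qed
  moreover have "\<forall>i<S. \<forall>j<S. 0 \<le> P $$ (i, j)" using p_nonneg by (simp add: P_index)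
  moreover obtain s where s: "s \<in> F" using F by blast
  ultimately have mass: "1 \<le> (\<Sum>s'\<in>F. (P ^\<^sub>m k) $$ (s, s'))" for k
    using pow_mat_mass_on_closed_set[OF P _ F(1)] by blast
  have "summable (\<lambda>k. \<Sum>s'\<in>F. (P ^\<^sub>m k) $$ (s, s'))"
    using transient \<sigma> s F unfolding transient_def P_def by (intro summable_sum) blast
  then have "(\<lambda>k. \<Sum>s'\<in>F. (P ^\<^sub>m k) $$ (s, s')) \<longlonglongrightarrow> 0" by (rule summable_LIMSEQ_zero)
  then show False using mass LIMSEQ_le_const[of _ 0 1] by fastforce
qed

section \<open>Perron vector of a transient decision process\<close>

lemma Bmat_carrier: "Bmat S A p r \<beta> d \<in> carrier_mat S S"
  by (simp add: Bmat_def)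

lemma bvec_carrier: "bvec S A p r \<beta> d \<in> carrier_vec S"
  by (simp add: bvec_def)

lemma weighted_transition_nonneg:
  assumes "mdp S A p" "rand_rule S A d" "s < S" "a \<in> A s" "s' \<le> S"
  shows "0 \<le> p s a s' * d s a * exp (- \<beta> * r s a s')"
  using assms unfolding mdp_def rand_rule_def by simp

lemma Bmat_nonneg:
  assumes "mdp S A p" "rand_rule S A d"
  shows "\<forall>i<S. \<forall>j<S. 0 \<le> Bmat S A p r \<beta> d $$ (i, j)"
  using weighted_transition_nonneg[OF assms] by (simp add: Bmat_def sum_nonneg)

lemma bvec_nonneg:
  assumes "mdp S A p" "rand_rule S A d"
  shows "\<forall>i<S. 0 \<le> bvec S A p r \<beta> d $ i"
  using weighted_transition_nonneg[OF assms] by (simp add: bvec_def sum_nonneg)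

lemma weighted_transition_sum_pos:
  assumes "mdp S A p" "rand_rule S A d" "s < S" "a \<in> A s" "s' \<le> S"
    and "0 < d s a" "0 < p s a s'"
  shows "0 < (\<Sum>a\<in>A s. p s a s' * d s a * exp (- \<beta> * r s a s'))"
  using assms(1,3-) weighted_transition_nonneg[OF assms(1-3) _ assms(5)]
  by (intro sum_pos2[of _ a]) (auto simp: mdp_def)

lemma left_perron_support_closed:
  assumes mdp: "mdp S A p" and rand: "rand_rule S A d"
    and f: "f \<in> carrier_vec S" "\<forall>i<S. 0 \<le> f $ i"
    and eig: "transpose_mat (Bmat S A p r \<beta> d) *\<^sub>v f = spec_rad (Bmat S A p r \<beta> d) \<cdot>\<^sub>v f"
    and no_exit: "f \<bullet> bvec S A p r \<beta> d \<le> 0"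
    and s: "s < S" "0 < f $ s" and a: "a \<in> A s" "0 < d s a"
    and s': "s' \<le> S" "0 < p s a s'"
  shows "s' < S \<and> 0 < f $ s'"
proof (cases "s' = S")
  case True
  then have "0 < f $ s * bvec S A p r \<beta> d $ s"
    using weighted_transition_sum_pos[OF mdp rand s(1) a(1) s'(1) a(2) s'(2)] s by (simp add: bvec_def)
  also have "\<dots> \<le> f \<bullet> bvec S A p r \<beta> d"
    using nonneg_component_le_scalar_prod[OF f(1) bvec_carrier f(2) bvec_nonneg[OF mdp rand] s(1)] .
  finally show ?thesis using no_exit by simp
next
  case False
  then have "0 < Bmat S A p r \<beta> d $$ (s, s')"
    using weighted_transition_sum_pos[OF mdp rand s(1) a(1) s'(1) a(2) s'(2)] s' s by (simp add: Bmat_def)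
  then show ?thesis
    using left_eigenvector_support_closed[OF Bmat_carrier Bmat_nonneg[OF mdp rand] f eig s] s' False
    by simp
qed

lemma rand_rule_support_selection:
  assumes "rand_rule S A d"
  obtains \<sigma> where "\<forall>s<S. \<sigma> s \<in> A s \<and> 0 < d s (\<sigma> s)"
proof
  have "\<exists>a\<in>A s. 0 < d s a" if "s < S" for s
  proof (rule ccontr)
    assume "\<not> ?thesis"
    then have "(\<Sum>a\<in>A s. d s a) = 0"
      using assms that unfolding rand_rule_def by (metis linorder_not_le order_antisym sum.neutral)
    then show False using assms that unfolding rand_rule_def by simp
  qed
  then show "\<forall>s<S. (SOME a. a \<in> A s \<and> 0 < d s a) \<in> A s \<and> 0 < d s (SOME a. a \<in> A s \<and> 0 < d s a)"
    by (metis (mono_tags, lifting) someI_ex)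
qed

theorem lemma9:
  fixes S :: nat and A :: "nat \<Rightarrow> 'a set" and p r :: "nat \<Rightarrow> 'a \<Rightarrow> nat \<Rightarrow> real"
    and \<beta> :: real and d :: "nat \<Rightarrow> 'a \<Rightarrow> real"
  assumes "0 < S"
    and "0 < \<beta>"
    and "mdp S A p"
    and "transient S A p"
    and "rand_rule S A d"
  shows "\<exists>f \<in> carrier_vec S. (\<forall>i<S. 0 \<le> f $ i) \<and> f \<noteq> 0\<^sub>v S \<and>
           transpose_mat (Bmat S A p r \<beta> d) *\<^sub>v f = spec_rad (Bmat S A p r \<beta> d) \<cdot>\<^sub>v f \<and>
           f \<bullet> bvec S A p r \<beta> d > 0"
proof -
  note mdp = \<open>mdp S A p\<close> and rand = \<open>rand_rule S A d\<close>
  obtain f where f: "f \<in> carrier_vec S" "\<forall>i<S. 0 \<le> f $ i" and f0: "f \<noteq> 0\<^sub>v S"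
    and eig: "transpose_mat (Bmat S A p r \<beta> d) *\<^sub>v f = spec_rad (Bmat S A p r \<beta> d) \<cdot>\<^sub>v f"
    using nonneg_mat_left_perron_vector[OF Bmat_carrier \<open>0 < S\<close> Bmat_nonneg[OF mdp rand]] .
  have "0 < f \<bullet> bvec S A p r \<beta> d"
  proof (rule ccontr)
    assume "\<not> ?thesis"
    then have no_exit: "f \<bullet> bvec S A p r \<beta> d \<le> 0" by simp
    obtain \<sigma> where \<sigma>: "\<forall>s<S. \<sigma> s \<in> A s \<and> 0 < d s (\<sigma> s)"
      using rand_rule_support_selection[OF rand] .
    define F where "F = {s. s < S \<and> 0 < f $ s}"
    obtain j where "j < S" "f $ j \<noteq> 0" using f(1) f0 by (auto simp: vec_eq_iff)
    then have "F \<noteq> {}" using f(2) unfolding F_def by (metis empty_Collect_eq less_eq_real_def)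
    moreover have "s' \<in> F" if "s \<in> F" "s' \<le> S" "0 < p s (\<sigma> s) s'" for s s'
    proof -
      from \<open>s \<in> F\<close> have s: "s < S" "0 < f $ s" unfolding F_def by auto
      with \<sigma> have "\<sigma> s \<in> A s" "0 < d s (\<sigma> s)" by auto
      from left_perron_support_closed[OF mdp rand f eig no_exit s this that(2,3)]
      show ?thesis unfolding F_def by simp
    qed
    ultimately show False
      using transient_no_closed_set[OF mdp \<open>transient S A p\<close>, of \<sigma> F] \<sigma> unfolding F_def by blast
  qed
  with f f0 eig show ?thesis by blast
qed

end
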